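(* Let $n\ge 3$ and let $C\in\mathbb{R}^{n\times n}$ be nonnegative, doubly stochastic, irreducible, with zero diagonal entries. Consider the map $F(x)=C^\top x+\mathrm{diag}(x)x-C^\top\mathrm{diag}(x)x$ on the simplex $\Delta$. Then the set of points $x\in\Delta$ with $F(x)=x$ is exactly $\{e_1,\dots,e_n,\tfrac{1}{n}\mathbf{1}\}$; in particular, $\tfrac1n\mathbf 1$ is the unique equilibrium of the Modified DeGroot-Friedkin model $x(s+1)=F(x(s))$ in $\Delta$ other than $e_1,\dots,e_n$.
   Context: $\Delta=\{x\in\mathbb{R}^n: x\ge 0,\ \sum_i x_i=1\}$; $e_i$ is the $i$th standard basis vector; $\mathbf 1$ is the all-ones vector. Doubly stochastic means nonnegative with all row sums and all column sums equal to $1$. *)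

theory Defs
  imports "HOL-Analysis.Analysis"
begin

definition prob_simplex :: "(real ^ 'n) set" where
  "prob_simplex = {x. (\<forall>i. x $ i \<ge> 0) \<and> (\<Sum>i\<in>UNIV. x $ i) = 1}"

definition nonneg_matrix :: "real ^ 'n ^ 'n \<Rightarrow> bool" where
  "nonneg_matrix C \<longleftrightarrow> (\<forall>i j. C $ i $ j \<ge> 0)"

definition doubly_stochastic :: "real ^ 'n ^ 'n \<Rightarrow> bool" where
  "doubly_stochastic C \<longleftrightarrow> nonneg_matrix C \<and>
     (\<forall>i. (\<Sum>j\<in>UNIV. C $ i $ j) = 1) \<and> (\<forall>j. (\<Sum>i\<in>UNIV. C $ i $ j) = 1)"

definition irreducible_matrix :: "real ^ 'n ^ 'n \<Rightarrow> bool" where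
  "irreducible_matrix C \<longleftrightarrow> (\<forall>i j. (i, j) \<in> {(a, b). C $ a $ b \<noteq> 0}\<^sup>+)"

definition diag_vec :: "real ^ 'n \<Rightarrow> real ^ 'n ^ 'n" where
  "diag_vec x = (\<chi> i j. if i = j then x $ i else 0)"

definition mDF_map :: "real ^ 'n ^ 'n \<Rightarrow> real ^ 'n \<Rightarrow> real ^ 'n" where
  "mDF_map C x = transpose C *v x + diag_vec x *v x - transpose C *v (diag_vec x *v x)"

definition std_basis :: "'n \<Rightarrow> real ^ 'n" where
  "std_basis i = (\<chi> j. if j = i then 1 else 0)"

end

theory Submission
  imports Defs
begin

text \<open>Writing \<open>q = x - x\<^sup>2\<close> (componentwise), the map is \<open>F x = C\<^sup>T q + x\<^sup>2\<close>, so \<open>x\<close> is a fixed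
  point iff \<open>q\<close> is a fixed vector of \<open>C\<^sup>T\<close>. Since \<open>C\<^sup>T\<close> averages over the columns of an
  irreducible column-stochastic matrix, the maximum principle forces \<open>q\<close> to be constant.
  Then any two distinct coordinates of \<open>x\<close> are the two roots of \<open>t - t\<^sup>2 = c\<close> and sum to 1;
  with at least three coordinates on the simplex, this leaves a zero coordinate, hence
  \<open>c = 0\<close> and \<open>x\<close> is a vertex. Otherwise all coordinates agree and \<open>x\<close> is the barycentre.\<close>

lemma diag_vec_mult_self_nth: "(diag_vec x *v x) $ i = (x $ i)\<^sup>2"
proof -
  have "(diag_vec x *v x) $ i = (\<Sum>j\<in>UNIV. (if i = j then x $ i else 0) * x $ j)"
    by (simp add: diag_vec_def matrix_vector_mult_def)
  also have "\<dots> = (\<Sum>j\<in>UNIV. if j = i then x $ i * x $ j else 0)"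
    by (rule sum.cong) auto
  finally show ?thesis by (simp add: power2_eq_square)
qed

lemma transpose_mult_vec_nth: "(transpose C *v y) $ i = (\<Sum>j\<in>UNIV. C $ j $ i * y $ j)"
  by (simp add: matrix_vector_mult_def transpose_def)

lemma mDF_map_fixed_iff:
  "mDF_map C x = x \<longleftrightarrow>
     transpose C *v (x - diag_vec x *v x) = x - diag_vec x *v x"
proof -
  have "mDF_map C x = transpose C *v (x - diag_vec x *v x) + diag_vec x *v x"
    by (simp add: mDF_map_def algebra_simps)
  then show ?thesis by (auto simp: algebra_simps)
qed

lemma transpose_mult_const_vec:
  assumes "\<forall>j. (\<Sum>i\<in>UNIV. C $ i $ j) = (1::real)"
  shows "transpose C *v (\<chi> i. c) = (\<chi> i. c)"
  unfolding vec_eq_iff transpose_mult_vec_nth using assms by (simp flip: sum_distrib_right)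

text \<open>Maximum principle: the value of \<open>y\<close> at a column is a convex combination of its
  values along that column, so a maximum propagates backwards along every edge of the
  digraph of \<open>C\<close>, and by irreducibility to every index.\<close>

lemma irreducible_column_stochastic_fixed_vec_const:
  fixes C :: "real ^ 'n ^ 'n"
  assumes nonneg: "nonneg_matrix C"
    and col_sums: "\<forall>j. (\<Sum>i\<in>UNIV. C $ i $ j) = 1"
    and irred: "irreducible_matrix C"
    and fixed: "transpose C *v y = y"
  shows "y $ a = y $ b"
proof -
  define M where "M = Max (range (($) y))"
  have le_M: "y $ k \<le> M" for k
    by (simp add: M_def)
  have "M \<in> range (($) y)"
    unfolding M_def by (rule Max_in) auto
  then obtain m where m: "y $ m = M"
    by auto
  have max_edge: "y $ i = M" if "y $ j = M" "C $ i $ j \<noteq> 0" for i j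
  proof -
    have "(\<Sum>k\<in>UNIV. C $ k $ j * (M - y $ k)) =
          M * (\<Sum>k\<in>UNIV. C $ k $ j) - (transpose C *v y) $ j"
      unfolding transpose_mult_vec_nth by (simp add: algebra_simps sum_subtractf sum_distrib_left)
    also have "\<dots> = 0"
      using col_sums fixed that(1) by simp
    finally have "\<forall>k\<in>UNIV. C $ k $ j * (M - y $ k) = 0"
      using nonneg le_M by (subst (asm) sum_nonneg_eq_0_iff) (auto simp: nonneg_matrix_def)
    then show ?thesis
      using that(2) by (metis UNIV_I mult_eq_0_iff right_minus_eq)
  qed
  have reach_max: "y $ i = M" if "(i, m) \<in> {(a, b). C $ a $ b \<noteq> 0}\<^sup>+" for i
    using that
  proof (induction rule: converse_trancl_induct)
    case (base i)
    then show ?case using max_edge[OF m] by simp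
  next
    case (step i k)
    then show ?case using max_edge by simp
  qed
  show ?thesis
    using reach_max[of a] reach_max[of b] irred
    by (simp add: irreducible_matrix_def)
qed

lemma prob_simplex_sum_le_1:
  assumes "x \<in> prob_simplex"
  shows "(\<Sum>i\<in>A. x $ i) \<le> 1"
proof -
  have "(\<Sum>i\<in>A. x $ i) \<le> (\<Sum>i\<in>UNIV. x $ i)"
    using assms by (intro sum_mono2) (auto simp: prob_simplex_def)
  then show ?thesis
    using assms by (simp add: prob_simplex_def)
qed

lemma prob_simplex_eq_std_basis:
  assumes x: "x \<in> prob_simplex" and "x $ m = 1"
  shows "x = std_basis m"
proof -
  have "x $ i = 0" if "i \<noteq> m" for i
    using prob_simplex_sum_le_1[OF x, of "{i, m}"] x that assms(2)
    by (simp add: prob_simplex_def order_antisym)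
  then show ?thesis
    using assms(2) by (auto simp: vec_eq_iff std_basis_def)
qed

lemma prob_simplex_eq_barycentre:
  fixes x :: "real ^ 'n"
  assumes "x \<in> prob_simplex" and "\<forall>i j. x $ i = x $ j"
  shows "x = (\<chi> i. 1 / real CARD('n))"
proof -
  obtain c where c: "\<forall>i. x $ i = c"
    using assms(2) by blast
  then have "real CARD('n) * c = 1"
    using assms(1) by (simp add: prob_simplex_def)
  then show ?thesis
    using c by (simp add: vec_eq_iff field_simps)
qed

lemma same_logistic_value:
  fixes s t :: real
  assumes "s - s\<^sup>2 = t - t\<^sup>2"
  shows "s = t \<or> s + t = 1"
proof -
  have "(s - t) * (1 - s - t) = 0"
    using assms by (simp add: algebra_simps power2_eq_square)
  then show ?thesis by auto
qed

lemma prob_simplex_const_logistic: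
  fixes x :: "real ^ 'n"
  assumes "CARD('n) \<ge> 3" and x: "x \<in> prob_simplex"
    and const: "\<forall>i j. x $ i - (x $ i)\<^sup>2 = x $ j - (x $ j)\<^sup>2"
  shows "x \<in> range std_basis \<union> {(\<chi> i. 1 / real CARD('n))}"
proof (cases "\<forall>i j. x $ i = x $ j")
  case True
  then show ?thesis
    using prob_simplex_eq_barycentre[OF x] by simp
next
  case False
  then obtain i j where "x $ i \<noteq> x $ j"
    by blast
  then have ij: "i \<noteq> j" and sum_ij: "x $ i + x $ j = 1"
    using same_logistic_value const by blast+
  have "{i, j} \<noteq> UNIV"
  proof
    assume "{i, j} = UNIV"
    then have "CARD('n) = card {i, j}"
      by simp
    also have "\<dots> \<le> 2"
      by (simp add: card_insert_if)
    finally show False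
      using assms(1) by simp
  qed
  then obtain k where k: "k \<noteq> i" "k \<noteq> j"
    by blast
  have "x $ i + x $ j + x $ k \<le> 1"
    using prob_simplex_sum_le_1[OF x, of "{i, j, k}"] ij k by (simp add: add.assoc)
  then have "x $ k = 0"
    using sum_ij x by (simp add: prob_simplex_def order_antisym)
  then have "x $ l * (1 - x $ l) = 0" for l
    using const[rule_format, of l k] by (simp add: algebra_simps power2_eq_square)
  then have "x $ l = 0 \<or> x $ l = 1" for l
    by auto
  then obtain m where "x $ m = 1"
    using sum_ij by force
  then show ?thesis
    using prob_simplex_eq_std_basis[OF x] by blast
qed

theorem theorem3:
  fixes C :: "real ^ 'n ^ 'n"
  assumes "CARD('n) \<ge> 3"
    and "nonneg_matrix C"
    and "doubly_stochastic C"
    and "irreducible_matrix C"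
    and "\<forall>i. C $ i $ i = 0"
  shows "{x \<in> prob_simplex. mDF_map C x = x} =
           range std_basis \<union> {(\<chi> i. 1 / real CARD('n))}"
proof -
  have col_sums: "\<forall>j. (\<Sum>i\<in>UNIV. C $ i $ j) = 1"
    using assms(3) by (simp add: doubly_stochastic_def)
  show ?thesis
  proof (intro equalityI subsetI)
    fix x assume "x \<in> {x \<in> prob_simplex. mDF_map C x = x}"
    then have x: "x \<in> prob_simplex"
      and "transpose C *v (x - diag_vec x *v x) = x - diag_vec x *v x"
      by (auto simp: mDF_map_fixed_iff)
    then have "\<forall>i j. x $ i - (x $ i)\<^sup>2 = x $ j - (x $ j)\<^sup>2"
      using irreducible_column_stochastic_fixed_vec_const[OF assms(2) col_sums assms(4)]
      by (metis vector_minus_component diag_vec_mult_self_nth)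
    then show "x \<in> range std_basis \<union> {(\<chi> i. 1 / real CARD('n))}"
      using prob_simplex_const_logistic[OF assms(1) x] by blast
  next
    fix x :: "real ^ 'n" assume "x \<in> range std_basis \<union> {(\<chi> i. 1 / real CARD('n))}"
    then obtain c where "x \<in> prob_simplex" and "x - diag_vec x *v x = (\<chi> i. c)"
      by (auto simp: prob_simplex_def std_basis_def vec_eq_iff diag_vec_mult_self_nth)
    then show "x \<in> {x \<in> prob_simplex. mDF_map C x = x}"
      using transpose_mult_const_vec[OF col_sums] by (simp add: mDF_map_fixed_iff)
  qed
qed

end
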